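(* If $k$ is odd, then $f(n,k)\ge\left(1-\frac{4}{(k+1)^2}+o(1)\right)\binom{n}{3}$, where $o(1)\to0$ as $n\to\infty$ with $k$ fixed.
   Context: Let $K^{(2)}_n$ be the complete graph on $[n]$ with the natural order. A $k$-edge-labeling $\phi$ of $K^{(2)}_n$ assigns to each pair $uv$ a label from a fixed linearly ordered set of size $k$. A triple $u<v<w$ is good if $\phi(uv)<\phi(vw)$, and bad otherwise. $f(n,k)$ is the maximum, over all $k$-edge-labelings of $K^{(2)}_n$, of the number of good triples. *)

theory Defs
  imports Complex_Main
begin

text \<open>A k-edge-labeling assigns to each
pair u<v a label phi u v from the linearly ordered set {0..<k}; values of phi outside
pairs u<v in [n] are irrelevant.\<close>

definition edge_labeling :: "nat \<Rightarrow> nat \<Rightarrow> (nat \<Rightarrow> nat \<Rightarrow> nat) \<Rightarrow> bool" where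
  "edge_labeling n k phi \<longleftrightarrow> (\<forall>u v. 1 \<le> u \<and> u < v \<and> v \<le> n \<longrightarrow> phi u v < k)"

definition good_triples :: "nat \<Rightarrow> (nat \<Rightarrow> nat \<Rightarrow> nat) \<Rightarrow> (nat \<times> nat \<times> nat) set" where
  "good_triples n phi = {(u, v, w). 1 \<le> u \<and> u < v \<and> v < w \<and> w \<le> n \<and> phi u v < phi v w}"

definition f :: "nat \<Rightarrow> nat \<Rightarrow> nat" where
  "f n k = Max {card (good_triples n phi) | phi. edge_labeling n k phi}"

end

theory Submission
  imports Defs "HOL-Real_Asymp.Real_Asymp"
begin

text \<open>Cut [n] into M = (k+1)/2 consecutive blocks of length s = n div M + 1 and give the
edge uv the label b(u) + b(v), where b is the block index; the labels lie in {0..<2M-1}.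
For u < v < w we have b(u) \<le> b(w), and the triple is bad exactly when b(u) + b(v) \<ge> b(v) + b(w),
i.e. when u, v, w lie in one block. Hence at most M (s choose 3) \<approx> n^3/(6M^2) triples are bad,
and 1/M^2 = 4/(k+1)^2.\<close>

definition increasing_pairs :: "'a::linorder set \<Rightarrow> ('a \<times> 'a) set" where
  "increasing_pairs A = {(u, v). u \<in> A \<and> v \<in> A \<and> u < v}"

definition increasing_triples :: "'a::linorder set \<Rightarrow> ('a \<times> 'a \<times> 'a) set" where
  "increasing_triples A = {(u, v, w). u \<in> A \<and> v \<in> A \<and> w \<in> A \<and> u < v \<and> v < w}"

lemma finite_increasing_pairs: "finite A \<Longrightarrow> finite (increasing_pairs A)"
  by (rule finite_subset[of _ "A \<times> A"]) (auto simp: increasing_pairs_def)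

lemma finite_increasing_triples: "finite A \<Longrightarrow> finite (increasing_triples A)"
  by (rule finite_subset[of _ "A \<times> A \<times> A"]) (auto simp: increasing_triples_def)

lemma increasing_pairs_insert_max:
  assumes "\<forall>a\<in>A. a < b"
  shows "increasing_pairs (insert b A) = increasing_pairs A \<union> (\<lambda>u. (u, b)) ` A"
  using assms by (auto simp: increasing_pairs_def)

lemma increasing_triples_insert_max:
  assumes "\<forall>a\<in>A. a < b"
  shows "increasing_triples (insert b A) =
           increasing_triples A \<union> (\<lambda>(u, v). (u, v, b)) ` increasing_pairs A"
  using assms by (auto simp: increasing_triples_def increasing_pairs_def image_iff)

lemma card_increasing_pairs:
  assumes "finite A"
  shows "card (increasing_pairs A) = card A choose 2"
  using assms
proof (induction A rule: finite_linorder_max_induct)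
  case empty
  then show ?case by (simp add: increasing_pairs_def)
next
  case (insert b A)
  have "card (increasing_pairs (insert b A)) = card (increasing_pairs A) + card ((\<lambda>u. (u, b)) ` A)"
    unfolding increasing_pairs_insert_max[OF insert.hyps(2)] using insert.hyps
    by (intro card_Un_disjoint finite_increasing_pairs finite_imageI)
      (auto simp: increasing_pairs_def)
  also have "card ((\<lambda>u. (u, b)) ` A) = card A"
    by (simp add: card_image inj_on_def)
  moreover have "card (insert b A) = Suc (card A)"
    using insert.hyps by (intro card_insert_disjoint) auto
  ultimately show ?case
    using insert.IH by (simp add: numeral_2_eq_2)
qed

lemma card_increasing_triples:
  assumes "finite A"
  shows "card (increasing_triples A) = card A choose 3"
  using assms
proof (induction A rule: finite_linorder_max_induct)
  case empty
  then show ?case by (simp add: increasing_triples_def split_def)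
next
  case (insert b A)
  have "card (increasing_triples (insert b A))
          = card (increasing_triples A) + card ((\<lambda>(u, v). (u, v, b)) ` increasing_pairs A)"
    unfolding increasing_triples_insert_max[OF insert.hyps(2)] using insert.hyps
    by (intro card_Un_disjoint finite_increasing_triples finite_imageI finite_increasing_pairs)
      (auto simp: increasing_triples_def)
  also have "card ((\<lambda>(u, v). (u, v, b)) ` increasing_pairs A) = card A choose 2"
    using insert.hyps by (subst card_image) (auto simp: inj_on_def card_increasing_pairs)
  moreover have "card (insert b A) = Suc (card A)"
    using insert.hyps by (intro card_insert_disjoint) auto
  ultimately show ?case
    using insert.IH by (simp add: numeral_3_eq_3 numeral_2_eq_2)
qed

lemma real_binomial_3: "real (n choose 3) = real n * (real n - 1) * (real n - 2) / 6"
  unfolding binomial_gbinomial gbinomial_pochhammer'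
  by (simp add: pochhammer_prod numeral_3_eq_3 field_simps)

lemma real_binomial_3_le_cube: "real (n choose 3) \<le> real n ^ 3 / 6"
proof (cases "n < 3")
  case True
  then show ?thesis by (simp add: binomial_eq_0)
next
  case False
  then have "real n * (real n - 1) * (real n - 2) \<le> real n * real n * real n"
    by (intro mult_mono) auto
  then show ?thesis unfolding real_binomial_3 by (simp add: power3_eq_cube)
qed

lemma good_triples_subset: "good_triples n phi \<subseteq> increasing_triples {1..n}"
  by (auto simp: good_triples_def increasing_triples_def)

lemma card_good_triples_le_f:
  assumes "edge_labeling n k phi"
  shows "card (good_triples n phi) \<le> f n k"
proof -
  let ?S = "{card (good_triples n phi) | phi. edge_labeling n k phi}"
  have "?S \<subseteq> {..card (increasing_triples {1..n})}"
    using card_mono[OF finite_increasing_triples good_triples_subset] by fastforce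
  then have "finite ?S" using finite_subset by blast
  then show ?thesis unfolding f_def using assms by (intro Max_ge) auto
qed

definition block_sum_labeling :: "nat \<Rightarrow> nat \<Rightarrow> nat \<Rightarrow> nat" where
  "block_sum_labeling s u v = (u - 1) div s + (v - 1) div s"

lemma pred_div_eq_iff:
  fixes s u i :: nat
  assumes "0 < s" "0 < u"
  shows "(u - 1) div s = i \<longleftrightarrow> u \<in> {i * s<..i * s + s}"
proof -
  have "(u - 1) div s = i \<longleftrightarrow> i \<le> (u - 1) div s \<and> (u - 1) div s < i + 1"
    by auto
  also have "\<dots> \<longleftrightarrow> i * s \<le> u - 1 \<and> u - 1 < i * s + s"
    using assms(1) by (simp add: less_eq_div_iff_mult_less_eq div_less_iff_less_mult add.commute)
  also have "\<dots> \<longleftrightarrow> i * s < u \<and> u \<le> i * s + s"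
    using assms(2) by auto
  finally show ?thesis
    by simp
qed

lemma edge_labeling_block_sum_labeling:
  assumes "n < M * s"
  shows "edge_labeling n (2 * M - 1) (block_sum_labeling s)"
  unfolding edge_labeling_def block_sum_labeling_def
proof (intro allI impI)
  fix u v assume "1 \<le> u \<and> u < v \<and> v \<le> n"
  then have "(u - 1) div s < M" "(v - 1) div s < M"
    using assms by (auto simp: mult.commute intro!: less_mult_imp_div_less)
  then show "(u - 1) div s + (v - 1) div s < 2 * M - 1"
    by linarith
qed

lemma card_bad_triples_block_sum_labeling:
  assumes "0 < s" "n < M * s"
  shows "card (increasing_triples {1..n} - good_triples n (block_sum_labeling s)) \<le> M * (s choose 3)"
proof -
  let ?phi = "block_sum_labeling s"
  let ?block = "\<lambda>i. {i * s<..i * s + s}"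
  have bad_subset:
    "increasing_triples {1..n} - good_triples n ?phi \<subseteq> (\<Union>i<M. increasing_triples (?block i))"
  proof
    fix x assume x: "x \<in> increasing_triples {1..n} - good_triples n ?phi"
    then obtain u v w where uvw: "x = (u, v, w)" "0 < u" "u < v" "v < w" "w \<le> n"
      by (auto simp: increasing_triples_def)
    define i where "i = (u - 1) div s"
    have "(w - 1) div s \<le> i"
      using x uvw by (auto simp: good_triples_def block_sum_labeling_def i_def)
    moreover have "i \<le> (v - 1) div s" "(v - 1) div s \<le> (w - 1) div s"
      using uvw by (auto simp: i_def div_le_mono)
    ultimately have "(v - 1) div s = i" "(w - 1) div s = i" by auto
    then have "x \<in> increasing_triples (?block i)"
      using uvw pred_div_eq_iff[OF assms(1)] by (auto simp: increasing_triples_def i_def)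
    moreover have "i < M"
      using assms(2) uvw by (auto simp: i_def mult.commute intro: less_mult_imp_div_less)
    ultimately show "x \<in> (\<Union>i<M. increasing_triples (?block i))" by blast
  qed
  have "card (increasing_triples {1..n} - good_triples n ?phi)
          \<le> (\<Sum>i<M. card (increasing_triples (?block i)))"
    by (rule order.trans[OF card_mono[OF _ bad_subset] card_UN_le])
      (auto intro: finite_increasing_triples)
  also have "\<dots> = M * (s choose 3)"
    by (simp add: card_increasing_triples)
  finally show ?thesis .
qed

lemma binomial_3_le_f_plus_blocks:
  assumes "0 < M"
  shows "n choose 3 \<le> f n (2 * M - 1) + M * ((n div M + 1) choose 3)"
proof -
  define s where "s = n div M + 1"
  let ?phi = "block_sum_labeling s"
  have "n < M * s"
    unfolding s_def using assms by (simp add: distrib_left dividend_less_times_div)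
  then have lab: "edge_labeling n (2 * M - 1) ?phi"
    and bad: "card (increasing_triples {1..n} - good_triples n ?phi) \<le> M * (s choose 3)"
    using edge_labeling_block_sum_labeling card_bad_triples_block_sum_labeling
    unfolding s_def by auto
  have "card (increasing_triples {1..n} - good_triples n ?phi)
          = (n choose 3) - card (good_triples n ?phi)"
    using card_Diff_subset[OF finite_subset[OF good_triples_subset finite_increasing_triples]
        good_triples_subset] card_increasing_triples[of "{1..n}"] by simp
  then show ?thesis
    using bad card_good_triples_le_f[OF lab] unfolding s_def by linarith
qed

lemma binomial_3_minus_cube_le_f:
  assumes "0 < M"
  shows "real (n choose 3) - (real n + real M) ^ 3 / (6 * real M ^ 2) \<le> real (f n (2 * M - 1))"
proof -
  define s where "s = n div M + 1"
  have "real s \<le> real n / real M + 1"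
    unfolding s_def using of_nat_div_le_of_nat[of n M] by simp
  also have "\<dots> = (real n + real M) / real M"
    using assms by (simp add: field_simps)
  finally have s_le: "real s \<le> (real n + real M) / real M" .
  have "real M * real (s choose 3) \<le> real M * (real s ^ 3 / 6)"
    by (intro mult_left_mono real_binomial_3_le_cube) auto
  also have "\<dots> \<le> real M * (((real n + real M) / real M) ^ 3 / 6)"
    using s_le by (intro mult_left_mono divide_right_mono power_mono) auto
  also have "\<dots> = (real n + real M) ^ 3 / (6 * real M ^ 2)"
    using assms by (simp add: field_simps power3_eq_cube power2_eq_square)
  finally have "real M * real (s choose 3) \<le> (real n + real M) ^ 3 / (6 * real M ^ 2)" .
  moreover have "real (n choose 3) \<le> real (f n (2 * M - 1)) + real M * real (s choose 3)"
    using binomial_3_le_f_plus_blocks[OF assms, of n] unfolding s_def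
    by (metis of_nat_add of_nat_le_iff of_nat_mult)
  ultimately show ?thesis
    by linarith
qed

theorem proposition4p2:
  fixes k :: nat
  assumes "odd k"
  shows "\<exists>g :: nat \<Rightarrow> real. g \<longlonglongrightarrow> 0 \<and>
           (\<forall>n. real (f n k) \<ge> (1 - 4 / (real k + 1)^2 + g n) * real (n choose 3))"
proof -
  define M where "M = (k + 1) div 2"
  have k: "k = 2 * M - 1" "0 < M" "real k + 1 = 2 * real M"
    using assms unfolding M_def by (auto elim!: oddE)
  \<comment> \<open>chosen so that (1 - 1/M^2 + g n) (n choose 3) = (n choose 3) - (n + M)^3/(6M^2) for n \<ge> 3\<close>
  define g where
    "g n = (1 - (real n + real M) ^ 3 / (real n * (real n - 1) * (real n - 2))) / real M ^ 2" for n
  have "(\<lambda>n. (1 - (real n + c) ^ 3 / (real n * (real n - 1) * (real n - 2))) / c ^ 2) \<longlonglongrightarrow> 0"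
    if "c > 0" for c :: real
    using that by real_asymp
  then have "g \<longlonglongrightarrow> 0" using k(2) unfolding g_def by simp
  moreover have "(1 - 4 / (real k + 1)^2 + g n) * real (n choose 3) \<le> real (f n k)" for n
  proof (cases "n < 3")
    case True
    then show ?thesis by (simp add: binomial_eq_0)
  next
    case False
    define D where "D = real n * (real n - 1) * (real n - 2)"
    define Q where "Q = real M ^ 2"
    have "D \<noteq> 0" "Q \<noteq> 0" "4 / (real k + 1)^2 = 1 / Q"
      using k(2) False unfolding D_def Q_def k(3) by (auto simp: power2_eq_square)
    then have "(1 - 4 / (real k + 1)^2 + g n) * real (n choose 3)
                 = real (n choose 3) - (real n + real M) ^ 3 / (6 * real M ^ 2)"
      unfolding g_def real_binomial_3 D_def[symmetric] Q_def[symmetric] by (simp add: field_simps)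
    then show ?thesis
      using binomial_3_minus_cube_le_f[OF k(2), of n] k(1) by simp
  qed
  ultimately show ?thesis by blast
qed

end
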